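(* Consider a rule of the PJR-Exact family run on $(\mathcal{A},k)$, and fix $j$ with $0\le j\le k-1$ such that iterations $1,\dots,j$ are all normal (for $j=0$ this is vacuous). If some candidate $c_1\in C\setminus W_j$ is in an eager state after $j$ iterations, then there exists a candidate $c_2\in C\setminus W_j$ that is in a normal state after $j$ iterations.
   Context: Setting: voters $N=\{1,\dots,n\}$, candidates $C=\{c_1,\dots,c_m\}$, approval ballots $A_i\subseteq C$, $\mathcal{A}=(A_1,\dots,A_n)$, $k$ a positive integer with $k\le|C|$, $q=n/k$, $N_c=\{i: c\in A_i\}$. Convention: $\max\emptyset=0$. Dissatisfaction level: for $W\subseteq C$ with $|W|\le k$ and $c\in C\setminus W$, $\ell(c,W)$ is the largest nonnegative integer $\ell$ with $\ell=\lfloor \frac{k}{n}|\{i\in N: c\in A_i,\ |A_i\cap W|<\ell\}|\rfloor$. PJR-Exact family: iterative procedures selecting $w_1,\dots,w_k$, $W_0=\emptyset$, $W_j=W_{j-1}\cup\{w_j\}$, $w_j\notin W_{j-1}$, with vote fractions $f_i^0=1$, $0\le f_i^j\le f_i^{j-1}$, such that at each iteration $j$: (a) $f_i^j=f_i^{j-1}$ for $i\notin N_{w_j}$; (b) with $s=\sum_{i\in N_{w_j}}f_i^{j-1}$, if $s>q$ then $\sum_{i\in N_{w_j}}(f_i^{j-1}-f_i^j)=q$, and if $s\le q$ then $f_i^j=0$ for all $i\in N_{w_j}$; (c) if some $c\in C\setminus W_{j-1}$ has $\sum_{i\in N_c}f_i^{j-1}\ge q$ then $\sum_{i\in N_{w_j}}f_i^{j-1}\ge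 q$. Notation along a run: $\ell_j(c)=\ell(c,W_j)$ for $c\in C\setminus W_j$; for $c\in C\setminus W_j$ and $i\in N_c$, $\ell_j(i,c)=\max_{c'\in A_i\setminus(W_j\cup\{c\})}\ell_j(c')$; $g_i^j(c)=0$ if $\ell_j(i,c)\le|A_i\cap W_j|$ and $g_i^j(c)=\frac{\ell_j(i,c)-|A_i\cap W_j|-1}{\ell_j(i,c)}$ otherwise. States of $c\in C\setminus W_j$ after $j$ iterations: normal if (1) for each $i\in N_c$ with $\ell_j(i,c)>|A_i\cap W_j|$ we have $f_i^j\ge\frac{\ell_j(i,c)-|A_i\cap W_j|}{\ell_j(i,c)}$, and (2) $\sum_{i\in N_c}(f_i^j-g_i^j(c))\ge q$; starving if (1) fails; eager if not starving, $\sum_{i\in N_c}f_i^j\ge q$ and $\sum_{i\in N_c}(f_i^j-g_i^j(c))<q$; insufficiently supported if not starving and $\sum_{i\in N_c}f_i^j<q$. Normal iteration: iteration $j$ ($1\le j\le k$) is normal if $w_j$ is in normal state after $j-1$ iterations and, for each $i\in N_{w_j}$ with $\ell_{j-1}(i,w_j)>|A_i\cap W_{j-1}|$, $f_i^j\ge\frac{\ell_{j-1}(i,w_j)-|A_i\cap W_j|}{\ell_{j-1}(i,w_j)}$. *)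

theory Defs
  imports Complex_Main
begin

(* A run of a rule consists of the selected
   candidates w 1, ..., w k and the vote fractions f j i  (= f_i^j). *)

definition voters :: "nat \<Rightarrow> (nat \<Rightarrow> 'c set) \<Rightarrow> 'c \<Rightarrow> nat set" where
  "voters n A c = {i \<in> {1..n}. c \<in> A i}"

definition quota :: "nat \<Rightarrow> nat \<Rightarrow> real" where
  "quota n k = real n / real k"

definition Wset :: "(nat \<Rightarrow> 'c) \<Rightarrow> nat \<Rightarrow> 'c set" where
  "Wset w j = w ` {1..j}"

definition dlevel :: "nat \<Rightarrow> (nat \<Rightarrow> 'c set) \<Rightarrow> nat \<Rightarrow> 'c \<Rightarrow> 'c set \<Rightarrow> nat" where
  "dlevel n A k c W = Max {l::nat. int l =
      \<lfloor>real k / real n * real (card {i \<in> {1..n}. c \<in> A i \<and> card (A i \<inter> W) < l})\<rfloor>}"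

definition voter_level :: "nat \<Rightarrow> (nat \<Rightarrow> 'c set) \<Rightarrow> nat \<Rightarrow> 'c set \<Rightarrow> nat \<Rightarrow> 'c \<Rightarrow> nat" where
  "voter_level n A k W i c =
     (if A i - (W \<union> {c}) = {} then 0
      else Max ((\<lambda>c'. dlevel n A k c' W) ` (A i - (W \<union> {c}))))"

definition gval :: "nat \<Rightarrow> (nat \<Rightarrow> 'c set) \<Rightarrow> nat \<Rightarrow> 'c set \<Rightarrow> nat \<Rightarrow> 'c \<Rightarrow> real" where
  "gval n A k W i c =
     (let L = voter_level n A k W i c in
      if L \<le> card (A i \<inter> W) then 0
      else (real L - real (card (A i \<inter> W)) - 1) / real L)"

definition pjr_exact_run ::
  "nat \<Rightarrow> 'c set \<Rightarrow> (nat \<Rightarrow> 'c set) \<Rightarrow> nat \<Rightarrow> (nat \<Rightarrow> 'c) \<Rightarrow> (nat \<Rightarrow> nat \<Rightarrow> real) \<Rightarrow> bool" where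
  "pjr_exact_run n C A k w f \<longleftrightarrow>
     (\<forall>i\<in>{1..n}. f 0 i = 1) \<and>
     (\<forall>j\<in>{1..k}.
        w j \<in> C \<and> w j \<notin> Wset w (j - 1) \<and>
        (\<forall>i\<in>{1..n}. 0 \<le> f j i \<and> f j i \<le> f (j - 1) i) \<and>
        (\<forall>i\<in>{1..n} - voters n A (w j). f j i = f (j - 1) i) \<and>
        (let s = (\<Sum>i\<in>voters n A (w j). f (j - 1) i) in
          (s > quota n k \<longrightarrow>
             (\<Sum>i\<in>voters n A (w j). f (j - 1) i - f j i) = quota n k) \<and>
          (s \<le> quota n k \<longrightarrow> (\<forall>i\<in>voters n A (w j). f j i = 0))) \<and>
        ((\<exists>c\<in>C - Wset w (j - 1). (\<Sum>i\<in>voters n A c. f (j - 1) i) \<ge> quota n k) \<longrightarrow>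
           (\<Sum>i\<in>voters n A (w j). f (j - 1) i) \<ge> quota n k))"

definition not_starving ::
  "nat \<Rightarrow> (nat \<Rightarrow> 'c set) \<Rightarrow> nat \<Rightarrow> (nat \<Rightarrow> 'c) \<Rightarrow> (nat \<Rightarrow> nat \<Rightarrow> real) \<Rightarrow> nat \<Rightarrow> 'c \<Rightarrow> bool" where
  "not_starving n A k w f j c \<longleftrightarrow>
     (\<forall>i\<in>voters n A c.
        voter_level n A k (Wset w j) i c > card (A i \<inter> Wset w j) \<longrightarrow>
        f j i \<ge> (real (voter_level n A k (Wset w j) i c) - real (card (A i \<inter> Wset w j)))
                 / real (voter_level n A k (Wset w j) i c))"

definition normal_state ::
  "nat \<Rightarrow> (nat \<Rightarrow> 'c set) \<Rightarrow> nat \<Rightarrow> (nat \<Rightarrow> 'c) \<Rightarrow> (nat \<Rightarrow> nat \<Rightarrow> real) \<Rightarrow> nat \<Rightarrow> 'c \<Rightarrow> bool" where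
  "normal_state n A k w f j c \<longleftrightarrow>
     not_starving n A k w f j c \<and>
     (\<Sum>i\<in>voters n A c. f j i - gval n A k (Wset w j) i c) \<ge> quota n k"

definition starving_state ::
  "nat \<Rightarrow> (nat \<Rightarrow> 'c set) \<Rightarrow> nat \<Rightarrow> (nat \<Rightarrow> 'c) \<Rightarrow> (nat \<Rightarrow> nat \<Rightarrow> real) \<Rightarrow> nat \<Rightarrow> 'c \<Rightarrow> bool" where
  "starving_state n A k w f j c \<longleftrightarrow> \<not> not_starving n A k w f j c"

definition eager_state ::
  "nat \<Rightarrow> (nat \<Rightarrow> 'c set) \<Rightarrow> nat \<Rightarrow> (nat \<Rightarrow> 'c) \<Rightarrow> (nat \<Rightarrow> nat \<Rightarrow> real) \<Rightarrow> nat \<Rightarrow> 'c \<Rightarrow> bool" where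
  "eager_state n A k w f j c \<longleftrightarrow>
     \<not> starving_state n A k w f j c \<and>
     (\<Sum>i\<in>voters n A c. f j i) \<ge> quota n k \<and>
     (\<Sum>i\<in>voters n A c. f j i - gval n A k (Wset w j) i c) < quota n k"

definition normal_iteration ::
  "nat \<Rightarrow> (nat \<Rightarrow> 'c set) \<Rightarrow> nat \<Rightarrow> (nat \<Rightarrow> 'c) \<Rightarrow> (nat \<Rightarrow> nat \<Rightarrow> real) \<Rightarrow> nat \<Rightarrow> bool" where
  "normal_iteration n A k w f j \<longleftrightarrow>
     normal_state n A k w f (j - 1) (w j) \<and>
     (\<forall>i\<in>voters n A (w j).
        voter_level n A k (Wset w (j - 1)) i (w j) > card (A i \<inter> Wset w (j - 1)) \<longrightarrow>
        f j i \<ge> (real (voter_level n A k (Wset w (j - 1)) i (w j)) - real (card (A i \<inter> Wset w j)))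
                 / real (voter_level n A k (Wset w (j - 1)) i (w j)))"

end

theory Submission
  imports Defs
begin

text \<open>Take an unselected candidate c2 of maximal dissatisfaction level L; an eager candidate has a
supporter i with positive g-value, which forces L \<ge> 1. Normality of the previous iterations
propagates: whenever a voter's ballot contains an unselected candidate of level l exceeding the
voter's current satisfaction a, the voter still holds at least (l - a)/l of its vote (look at the
last iteration that elected one of the voter's candidates). Hence no candidate is starving, and
each of the at least L q supporters of c2 with satisfaction below L keeps a slack
f - g \<ge> 1/L, so the slacks of c2 sum to at least q.\<close>

text \<open>The dissatisfaction level is the largest fixed point of this monotone map, which is bounded
by k.\<close>

definition dlevel_map :: "nat \<Rightarrow> (nat \<Rightarrow> 'c set) \<Rightarrow> nat \<Rightarrow> 'c \<Rightarrow> 'c set \<Rightarrow> nat \<Rightarrow> int" where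
  "dlevel_map n A k c W l =
     \<lfloor>real k / real n * real (card {i \<in> {1..n}. c \<in> A i \<and> card (A i \<inter> W) < l})\<rfloor>"

lemma mono_bounded_fixpoint_above:
  fixes h :: "nat \<Rightarrow> int"
  assumes mono: "mono h" and bound: "\<And>l. h l \<le> int B"
  shows "int l \<le> h l \<Longrightarrow> \<exists>m\<ge>l. int m = h m"
proof (induction "B + 1 - l" arbitrary: l rule: less_induct)
  case (less l)
  show ?case
  proof (cases "h l = int l")
    case True
    then show ?thesis by auto
  next
    case False
    define l' where "l' = nat (h l)"
    have l': "int l' = h l" "l < l'"
      using less.prems False unfolding l'_def by auto
    have "l' \<le> B" using bound[of l] l' by linarith
    moreover have "int l' \<le> h l'" using monoD[OF mono, of l l'] l' by auto
    ultimately obtain m where "l' \<le> m" "int m = h m"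
      using less.hyps[of l'] l' by force
    then show ?thesis using l' by (intro exI[of _ m]) auto
  qed
qed

lemma dlevel_map_mono: "mono (dlevel_map n A k c W)"
proof
  fix a b :: nat
  assume "a \<le> b"
  then have "card {i \<in> {1..n}. c \<in> A i \<and> card (A i \<inter> W) < a}
      \<le> card {i \<in> {1..n}. c \<in> A i \<and> card (A i \<inter> W) < b}"
    by (intro card_mono) auto
  then show "dlevel_map n A k c W a \<le> dlevel_map n A k c W b"
    unfolding dlevel_map_def by (intro floor_mono mult_left_mono) auto
qed

lemma dlevel_map_le: "dlevel_map n A k c W l \<le> int k"
proof -
  let ?m = "card {i \<in> {1..n}. c \<in> A i \<and> card (A i \<inter> W) < l}"
  have "?m \<le> n"
    using card_mono[of "{1..n}" "{i \<in> {1..n}. c \<in> A i \<and> card (A i \<inter> W) < l}"] by fastforce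
  then have "real k / real n * real ?m \<le> real k"
    by (cases "n = 0") (auto simp: field_simps intro: mult_left_mono)
  then show ?thesis unfolding dlevel_map_def by linarith
qed

lemma finite_dlevel_fixpoints: "finite {l. int l = dlevel_map n A k c W l}"
proof (rule finite_subset)
  show "{l. int l = dlevel_map n A k c W l} \<subseteq> {..k}"
  proof
    fix l
    assume "l \<in> {l. int l = dlevel_map n A k c W l}"
    then have "int l \<le> int k" using dlevel_map_le[of n A k c W l] by simp
    then show "l \<in> {..k}" by simp
  qed
qed simp

lemma dlevel_fixpoint: "int (dlevel n A k c W) = dlevel_map n A k c W (dlevel n A k c W)"
proof -
  have "0 \<in> {l. int l = dlevel_map n A k c W l}"
    unfolding dlevel_map_def by simp
  then have "{l. int l = dlevel_map n A k c W l} \<noteq> {}" by blast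
  then have "Max {l. int l = dlevel_map n A k c W l} \<in> {l. int l = dlevel_map n A k c W l}"
    by (rule Max_in[OF finite_dlevel_fixpoints])
  then show ?thesis unfolding dlevel_def dlevel_map_def by simp
qed

lemma dlevel_le: "dlevel n A k c W \<le> k"
  using dlevel_fixpoint[of n A k c W] dlevel_map_le[of n A k c W "dlevel n A k c W"] by linarith

lemma le_dlevel: "int l \<le> dlevel_map n A k c W l \<Longrightarrow> l \<le> dlevel n A k c W"
proof -
  assume "int l \<le> dlevel_map n A k c W l"
  from mono_bounded_fixpoint_above[OF dlevel_map_mono dlevel_map_le this]
  obtain m where m: "l \<le> m" "int m = dlevel_map n A k c W m"
    by blast
  have "m \<le> Max {l. int l = dlevel_map n A k c W l}"
    using finite_dlevel_fixpoints m(2) by (intro Max_ge) auto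
  then show ?thesis using m(1) unfolding dlevel_def dlevel_map_def by simp
qed

lemma dlevel_antimono:
  assumes "W \<subseteq> W'" and "\<And>i. i \<in> {1..n} \<Longrightarrow> finite (A i)"
  shows "dlevel n A k c W' \<le> dlevel n A k c W"
proof -
  let ?l = "dlevel n A k c W'"
  have sub: "{i \<in> {1..n}. c \<in> A i \<and> card (A i \<inter> W') < ?l}
      \<subseteq> {i \<in> {1..n}. c \<in> A i \<and> card (A i \<inter> W) < ?l}"
    using assms card_mono[of "A _ \<inter> W'" "A _ \<inter> W"] by fastforce
  have "dlevel_map n A k c W' ?l \<le> dlevel_map n A k c W ?l"
    unfolding dlevel_map_def using card_mono[OF _ sub]
    by (intro floor_mono mult_left_mono) auto
  then show ?thesis
    using dlevel_fixpoint[of n A k c W'] le_dlevel[of ?l n A k c W] by simp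
qed

lemma dlevel_le_card_supporters:
  "real (dlevel n A k c W)
     \<le> real k / real n * real (card {i \<in> {1..n}. c \<in> A i \<and> card (A i \<inter> W) < dlevel n A k c W})"
  using dlevel_fixpoint[of n A k c W] unfolding dlevel_map_def by linarith

lemma dlevel_le_voter_level:
  assumes "finite (A i)" and "c' \<in> A i - (W \<union> {c})"
  shows "dlevel n A k c' W \<le> voter_level n A k W i c"
  using assms unfolding voter_level_def by (auto intro: Max_ge)

lemma voter_level_attained:
  assumes "finite (A i)" and "0 < voter_level n A k W i c"
  obtains c' where "c' \<in> A i - (W \<union> {c})" and "dlevel n A k c' W = voter_level n A k W i c"
proof -
  have ne: "A i - (W \<union> {c}) \<noteq> {}"
    using assms(2) unfolding voter_level_def by auto
  then have "voter_level n A k W i c \<in> (\<lambda>c'. dlevel n A k c' W) ` (A i - (W \<union> {c}))"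
    unfolding voter_level_def using assms(1) by (simp add: Max_in)
  then show ?thesis using that by force
qed

lemma diff_divide_self_mono:
  fixes a l L :: real
  assumes "0 < l" and "l \<le> L" and "0 \<le> a"
  shows "(l - a) / l \<le> (L - a) / L"
proof -
  have "a / L \<le> a / l" using assms by (intro divide_left_mono) auto
  moreover have "(l - a) / l = 1 - a / l" and "(L - a) / L = 1 - a / L"
    using assms by (auto simp: field_simps)
  ultimately show ?thesis by linarith
qed

context
  fixes n k :: nat and C :: "'c set" and A :: "nat \<Rightarrow> 'c set"
    and w :: "nat \<Rightarrow> 'c" and f :: "nat \<Rightarrow> nat \<Rightarrow> real"
  assumes run: "pjr_exact_run n C A k w f"
begin

lemma run_initial: "i \<in> {1..n} \<Longrightarrow> f 0 i = 1"
  using run unfolding pjr_exact_run_def by blast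

lemma run_nonneg: "t \<le> k \<Longrightarrow> i \<in> {1..n} \<Longrightarrow> 0 \<le> f t i"
  using run unfolding pjr_exact_run_def by (cases t) force+

lemma run_unchanged_step:
  "t \<in> {1..k} \<Longrightarrow> i \<in> {1..n} \<Longrightarrow> w t \<notin> A i \<Longrightarrow> f t i = f (t - 1) i"
  using run unfolding pjr_exact_run_def voters_def by blast

lemma run_unchanged:
  assumes "i \<in> {1..n}" and "s \<le> j" and "j \<le> k" and "\<And>t. s < t \<Longrightarrow> t \<le> j \<Longrightarrow> w t \<notin> A i"
  shows "f j i = f s i"
  using assms(2-)
proof (induction j)
  case (Suc j)
  then show ?case
    using run_unchanged_step[OF _ assms(1), of "Suc j"] by (cases "s = Suc j") auto
qed simp

lemma last_approved_selection:
  assumes i: "i \<in> {1..n}" and "j \<le> k" and "A i \<inter> Wset w j \<noteq> {}"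
  obtains t where "t \<in> {1..j}" and "w t \<in> A i" and "f j i = f t i"
    and "A i \<inter> Wset w j = A i \<inter> Wset w t"
proof -
  define T where "T = {t \<in> {1..j}. w t \<in> A i}"
  have "finite T" and "T \<noteq> {}"
    using assms(3) unfolding T_def Wset_def by auto
  define t where "t = Max T"
  have t: "t \<in> {1..j}" "w t \<in> A i"
    using Max_in[OF \<open>finite T\<close> \<open>T \<noteq> {}\<close>] unfolding t_def T_def by auto
  have later: "w s \<notin> A i" if "t < s" "s \<le> j" for s
  proof
    assume "w s \<in> A i"
    then have "s \<in> T" unfolding T_def using that t by auto
    then show False using Max_ge[OF \<open>finite T\<close>] that unfolding t_def by fastforce
  qed
  have "f j i = f t i"
    using run_unchanged[OF i] t later \<open>j \<le> k\<close> by auto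
  moreover have "A i \<inter> Wset w j = A i \<inter> Wset w t"
    unfolding Wset_def using t later by (force simp: not_le[symmetric])
  ultimately show ?thesis using that t by blast
qed

lemma no_approved_selection:
  assumes "i \<in> {1..n}" and "j \<le> k" and "A i \<inter> Wset w j = {}"
  shows "f j i = 1"
proof -
  have "f j i = f 0 i"
    using assms by (intro run_unchanged) (auto simp: Wset_def)
  then show ?thesis using run_initial[OF assms(1)] by simp
qed

text \<open>The voter keeps at least the share guaranteed at the last normal iteration that elected one
of its candidates; levels only drop as the committee grows, so that guarantee covers c'.\<close>

lemma fraction_ge_level_ratio:
  assumes fin: "\<And>i. i \<in> {1..n} \<Longrightarrow> finite (A i)"
    and "j \<le> k" and normal: "\<forall>t\<in>{1..j}. normal_iteration n A k w f t"
    and i: "i \<in> {1..n}" and c': "c' \<in> A i - Wset w j"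
    and lt: "card (A i \<inter> Wset w j) < dlevel n A k c' (Wset w j)"
  shows "(real (dlevel n A k c' (Wset w j)) - real (card (A i \<inter> Wset w j)))
           / real (dlevel n A k c' (Wset w j)) \<le> f j i"
    (is "(real ?l - real ?a) / real ?l \<le> _")
proof (cases "A i \<inter> Wset w j = {}")
  case True
  then show ?thesis using no_approved_selection[OF i \<open>j \<le> k\<close>] lt by simp
next
  case False
  then obtain t where t: "t \<in> {1..j}" "w t \<in> A i" and ft: "f j i = f t i"
    and Wt: "A i \<inter> Wset w j = A i \<inter> Wset w t"
    using last_approved_selection[OF i \<open>j \<le> k\<close>] by blast
  define L where "L = voter_level n A k (Wset w (t - 1)) i (w t)"
  have prev: "Wset w (t - 1) \<subseteq> Wset w j" and "w t \<in> Wset w j"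
    using t unfolding Wset_def by auto
  then have "?l \<le> dlevel n A k c' (Wset w (t - 1))"
    by (intro dlevel_antimono fin)
  also have "\<dots> \<le> L"
    unfolding L_def using c' prev \<open>w t \<in> Wset w j\<close>
    by (intro dlevel_le_voter_level fin[OF i]) auto
  finally have lL: "?l \<le> L" .
  have "card (A i \<inter> Wset w (t - 1)) \<le> card (A i \<inter> Wset w t)"
    using fin[OF i] by (intro card_mono) (auto simp: Wset_def)
  also have "\<dots> = ?a" by (simp add: Wt)
  finally have "card (A i \<inter> Wset w (t - 1)) < L"
    using lt lL by linarith
  moreover have "i \<in> voters n A (w t)"
    unfolding voters_def using i t by auto
  ultimately have "(real L - real ?a) / real L \<le> f t i"
    using normal t unfolding normal_iteration_def L_def Wt by blast
  moreover have "(real ?l - real ?a) / real ?l \<le> (real L - real ?a) / real L"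
    using lt lL by (intro diff_divide_self_mono) auto
  ultimately show ?thesis using ft by linarith
qed

lemma not_starving_after_normal_iterations:
  assumes fin: "\<And>i. i \<in> {1..n} \<Longrightarrow> finite (A i)"
    and "j \<le> k" and normal: "\<forall>t\<in>{1..j}. normal_iteration n A k w f t"
  shows "not_starving n A k w f j c"
  unfolding not_starving_def
proof (intro ballI impI)
  fix i
  assume "i \<in> voters n A c" and lt: "card (A i \<inter> Wset w j) < voter_level n A k (Wset w j) i c"
  then have i: "i \<in> {1..n}" unfolding voters_def by auto
  obtain c' where "c' \<in> A i - (Wset w j \<union> {c})"
    and "dlevel n A k c' (Wset w j) = voter_level n A k (Wset w j) i c"
    using voter_level_attained[where A = A and i = i, OF fin[OF i]] lt by (metis gr_zeroI not_less0)
  then show "(real (voter_level n A k (Wset w j) i c) - real (card (A i \<inter> Wset w j)))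
      / real (voter_level n A k (Wset w j) i c) \<le> f j i"
    using fraction_ge_level_ratio[OF fin \<open>j \<le> k\<close> normal i, of c'] lt by auto
qed

lemma fraction_minus_gval_nonneg:
  assumes fin: "\<And>i. i \<in> {1..n} \<Longrightarrow> finite (A i)"
    and "j \<le> k" and normal: "\<forall>t\<in>{1..j}. normal_iteration n A k w f t"
    and i: "i \<in> voters n A c"
  shows "0 \<le> f j i - gval n A k (Wset w j) i c"
proof (cases "voter_level n A k (Wset w j) i c \<le> card (A i \<inter> Wset w j)")
  case True
  then show ?thesis
    using run_nonneg[OF \<open>j \<le> k\<close>] i unfolding gval_def voters_def by auto
next
  case False
  let ?L = "voter_level n A k (Wset w j) i c" and ?a = "card (A i \<inter> Wset w j)"
  have "(real ?L - real ?a) / real ?L \<le> f j i"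
    using not_starving_after_normal_iterations[OF fin \<open>j \<le> k\<close> normal] i False
    unfolding not_starving_def by auto
  moreover have "(real ?L - real ?a - 1) / real ?L \<le> (real ?L - real ?a) / real ?L"
    by (intro divide_right_mono) auto
  ultimately show ?thesis using False unfolding gval_def Let_def by simp
qed

text \<open>For a candidate of maximal level L every other candidate of the voter has level at most L,
which caps the g-value by (L - a - 1)/L while the voter keeps at least (L - a)/L.\<close>

lemma max_level_slack:
  assumes fin: "\<And>i. i \<in> {1..n} \<Longrightarrow> finite (A i)"
    and ballots: "\<And>i. i \<in> {1..n} \<Longrightarrow> A i \<subseteq> C"
    and "j \<le> k" and normal: "\<forall>t\<in>{1..j}. normal_iteration n A k w f t"
    and max: "\<And>c'. c' \<in> C - Wset w j \<Longrightarrow> dlevel n A k c' (Wset w j) \<le> dlevel n A k c (Wset w j)"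
    and i: "i \<in> {1..n}" and c: "c \<in> A i - Wset w j"
    and lt: "card (A i \<inter> Wset w j) < dlevel n A k c (Wset w j)"
  shows "1 / real (dlevel n A k c (Wset w j)) \<le> f j i - gval n A k (Wset w j) i c"
proof -
  let ?L = "dlevel n A k c (Wset w j)" and ?a = "card (A i \<inter> Wset w j)"
    and ?V = "voter_level n A k (Wset w j) i c"
  have share: "(real ?L - real ?a) / real ?L \<le> f j i"
    using fraction_ge_level_ratio[OF fin \<open>j \<le> k\<close> normal i c lt] .
  show ?thesis
  proof (cases "?V \<le> ?a")
    case True
    have "1 / real ?L \<le> (real ?L - real ?a) / real ?L"
      using lt by (intro divide_right_mono) auto
    then show ?thesis using share True unfolding gval_def Let_def by simp
  next
    case False
    then have "0 < ?V" by simp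
    then obtain c' where c': "c' \<in> A i - (Wset w j \<union> {c})" "dlevel n A k c' (Wset w j) = ?V"
      using voter_level_attained[where A = A and i = i, OF fin[OF i]] by blast
    then have "c' \<in> C - Wset w j" using ballots[OF i] by blast
    from max[OF this] have "?V \<le> ?L" using c'(2) by simp
    then have "(real ?V - (real ?a + 1)) / real ?V \<le> (real ?L - (real ?a + 1)) / real ?L"
      using False by (intro diff_divide_self_mono) auto
    also have "\<dots> = (real ?L - real ?a) / real ?L - 1 / real ?L"
      using lt by (simp add: field_simps)
    finally have "gval n A k (Wset w j) i c \<le> (real ?L - real ?a) / real ?L - 1 / real ?L"
      using False unfolding gval_def Let_def by (simp add: diff_diff_eq)
    then show ?thesis using share by linarith
  qed
qed

lemma max_level_normal:
  assumes fin: "\<And>i. i \<in> {1..n} \<Longrightarrow> finite (A i)"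
    and ballots: "\<And>i. i \<in> {1..n} \<Longrightarrow> A i \<subseteq> C"
    and "0 < k" and "j \<le> k" and normal: "\<forall>t\<in>{1..j}. normal_iteration n A k w f t"
    and c: "c \<in> C - Wset w j"
    and max: "\<And>c'. c' \<in> C - Wset w j \<Longrightarrow> dlevel n A k c' (Wset w j) \<le> dlevel n A k c (Wset w j)"
    and pos: "0 < dlevel n A k c (Wset w j)"
  shows "normal_state n A k w f j c"
proof -
  let ?L = "dlevel n A k c (Wset w j)"
  define S where "S = {i \<in> {1..n}. c \<in> A i \<and> card (A i \<inter> Wset w j) < ?L}"
  have L_le: "real ?L \<le> real k / real n * real (card S)"
    unfolding S_def by (rule dlevel_le_card_supporters)
  then have "0 < n" using pos by (cases n) auto
  have "quota n k \<le> real (card S) / real ?L"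
    using L_le \<open>0 < n\<close> \<open>0 < k\<close> pos unfolding quota_def by (simp add: field_simps)
  also have "\<dots> = (\<Sum>i\<in>S. 1 / real ?L)" by simp
  also have "\<dots> \<le> (\<Sum>i\<in>S. f j i - gval n A k (Wset w j) i c)"
    using c unfolding S_def by (intro sum_mono max_level_slack[OF fin ballots \<open>j \<le> k\<close> normal max]) auto
  also have "\<dots> \<le> (\<Sum>i\<in>voters n A c. f j i - gval n A k (Wset w j) i c)"
    using fraction_minus_gval_nonneg[OF fin \<open>j \<le> k\<close> normal]
    by (intro sum_mono2) (auto simp: S_def voters_def)
  finally show ?thesis
    unfolding normal_state_def
    using not_starving_after_normal_iterations[OF fin \<open>j \<le> k\<close> normal] by blast
qed

end

lemma eager_imp_level_above_satisfaction:
  assumes fin: "\<And>i. i \<in> {1..n} \<Longrightarrow> finite (A i)" and "eager_state n A k w f j c"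
  obtains i c' where "i \<in> {1..n}" and "c' \<in> A i - Wset w j"
    and "card (A i \<inter> Wset w j) < dlevel n A k c' (Wset w j)"
proof -
  have "0 < (\<Sum>i\<in>voters n A c. gval n A k (Wset w j) i c)"
    using assms(2) unfolding eager_state_def by (simp add: sum_subtractf)
  then have "\<not> (\<forall>i\<in>voters n A c. gval n A k (Wset w j) i c \<le> 0)"
    using sum_nonpos[of "voters n A c" "\<lambda>i. gval n A k (Wset w j) i c"] by force
  then obtain i where i: "i \<in> voters n A c" and "0 < gval n A k (Wset w j) i c"
    by (auto simp: not_le)
  then have lt: "card (A i \<inter> Wset w j) < voter_level n A k (Wset w j) i c"
    unfolding gval_def Let_def by (auto split: if_splits)
  have "i \<in> {1..n}" using i unfolding voters_def by auto
  moreover have "0 < voter_level n A k (Wset w j) i c" using lt by simp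
  then obtain c' where "c' \<in> A i - (Wset w j \<union> {c})"
    and "dlevel n A k c' (Wset w j) = voter_level n A k (Wset w j) i c"
    using voter_level_attained[where A = A and i = i, OF fin[OF \<open>i \<in> {1..n}\<close>]] by blast
  ultimately show ?thesis using that[of i c'] lt by auto
qed

theorem mainTheorem6:
  fixes n k :: nat and C :: "'c set" and A :: "nat \<Rightarrow> 'c set"
    and w :: "nat \<Rightarrow> 'c" and f :: "nat \<Rightarrow> nat \<Rightarrow> real" and j :: nat and c1 :: 'c
  assumes "finite C"
    and "\<forall>i\<in>{1..n}. A i \<subseteq> C"
    and "0 < k" and "k \<le> card C"
    and "pjr_exact_run n C A k w f"
    and "j \<le> k - 1"
    and "\<forall>t\<in>{1..j}. normal_iteration n A k w f t"
    and "c1 \<in> C - Wset w j"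
    and "eager_state n A k w f j c1"
  shows "\<exists>c2\<in>C - Wset w j. normal_state n A k w f j c2"
proof -
  have ballots: "\<And>i. i \<in> {1..n} \<Longrightarrow> A i \<subseteq> C" using assms(2) by blast
  have fin: "\<And>i. i \<in> {1..n} \<Longrightarrow> finite (A i)" using ballots \<open>finite C\<close> finite_subset by blast
  have bounded: "\<forall>c. c \<in> C - Wset w j \<longrightarrow> dlevel n A k c (Wset w j) < k + 1"
    by (simp add: dlevel_le le_imp_less_Suc)
  obtain c2 where c2: "c2 \<in> C - Wset w j"
    and max: "\<And>c'. c' \<in> C - Wset w j \<Longrightarrow> dlevel n A k c' (Wset w j) \<le> dlevel n A k c2 (Wset w j)"
    using Lattices_Big.ex_has_greatest_nat[where P = "\<lambda>c. c \<in> C - Wset w j"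
        and f = "\<lambda>c. dlevel n A k c (Wset w j)", OF assms(8) bounded]
    by blast
  obtain i c' where i: "i \<in> {1..n}" and c': "c' \<in> A i - Wset w j"
    and lt: "card (A i \<inter> Wset w j) < dlevel n A k c' (Wset w j)"
    using eager_imp_level_above_satisfaction[OF fin assms(9)] .
  have "c' \<in> C - Wset w j" using c' ballots[OF i] by blast
  from max[OF this] lt have "0 < dlevel n A k c2 (Wset w j)" by linarith
  moreover have "j \<le> k" using assms(6) by simp
  ultimately have "normal_state n A k w f j c2"
    using max_level_normal[OF assms(5) fin ballots \<open>0 < k\<close> _ assms(7) c2 max] by blast
  then show ?thesis using c2 by blast
qed

end
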